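(* For any sequence of pairs of probability distributions $\{(Q_n,G_n)\}$, one has $0\le\underline{\beta}^*\le\overline{\beta}^*\le1$.
   Context: For $\beta\ge0$ let $V_n(\beta)=\mathrm{TV}\big(Q_n^{n},((1-n^{-\beta})Q_n+n^{-\beta}G_n)^{n}\big)$, where $\mathrm{TV}(P,Q)=\sup_A|P(A)-Q(A)|$ is the total variation distance and $P^n$ the $n$-fold product measure. Define $\underline{\beta}^*=\sup\{\beta\ge0: V_n(\beta)\to1\}$ and $\overline{\beta}^*=\inf\{\beta\ge0:V_n(\beta)\to0\}$ (limits as $n\to\infty$). These are the fundamental limits for testing $H_0:Y_i\stackrel{iid}{\sim}Q_n$ versus $H_1:Y_i\stackrel{iid}{\sim}(1-n^{-\beta})Q_n+n^{-\beta}G_n$, $i=1,\dots,n$. *)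

theory Defs
  imports "HOL-Probability.Probability"
begin

definition mixture :: "real \<Rightarrow> 'a measure \<Rightarrow> 'a measure \<Rightarrow> 'a measure" where
  "mixture e P R = measure_of (space P) (sets P)
     (\<lambda>A. ennreal (1 - e) * emeasure P A + ennreal e * emeasure R A)"

definition TV :: "'a measure \<Rightarrow> 'a measure \<Rightarrow> real" where
  "TV P R = (SUP A \<in> sets P. \<bar>measure P A - measure R A\<bar>)"

definition V :: "(nat \<Rightarrow> 'a measure) \<Rightarrow> (nat \<Rightarrow> 'a measure) \<Rightarrow> real \<Rightarrow> nat \<Rightarrow> real" where
  "V Q G \<beta> n = TV (PiM {..<n} (\<lambda>_. Q n))
                   (PiM {..<n} (\<lambda>_. mixture (real n powr (-\<beta>)) (Q n) (G n)))"

text \<open>Lower threshold: sup of beta >= 0 with V_n(beta) -> 1, with the convention sup of the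
  empty set = 0 (the sup is taken within [0, infinity)).\<close>
definition beta_lower :: "(nat \<Rightarrow> 'a measure) \<Rightarrow> (nat \<Rightarrow> 'a measure) \<Rightarrow> real" where
  "beta_lower Q G = Sup (insert 0 {\<beta>. \<beta> \<ge> 0 \<and> (\<lambda>n. V Q G \<beta> n) \<longlonglongrightarrow> 1})"

definition beta_upper :: "(nat \<Rightarrow> 'a measure) \<Rightarrow> (nat \<Rightarrow> 'a measure) \<Rightarrow> real" where
  "beta_upper Q G = Inf {\<beta>. \<beta> \<ge> 0 \<and> (\<lambda>n. V Q G \<beta> n) \<longlonglongrightarrow> 0}"

end

theory Submission
  imports Defs
begin

text \<open>Two facts about \<open>V\<^sub>n(\<beta>)\<close> suffice. First, a hybrid argument that replaces the
  factors of the product one at a time bounds \<open>V\<^sub>n(\<beta>)\<close> by \<open>n \<cdot> n\<^sup>-\<^sup>\<beta>\<close>, which tends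
  to 0 for \<open>\<beta> > 1\<close>; hence the upper threshold is at most 1. Second, \<open>V\<^sub>n(\<beta>)\<close> is
  nonincreasing in \<open>\<beta>\<close>: the mixture with the smaller weight \<open>\<epsilon>'\<close> is itself the mixture of
  \<open>Q\<close> with the \<open>\<epsilon>\<close>-mixture at weight \<open>\<epsilon>'/\<epsilon>\<close>, and moving any factors of a product
  measure towards \<open>Q\<close> cannot increase its distance from \<open>Q\<^sup>n\<close>. So \<open>V\<^sub>n\<close> cannot tend to 1
  at some \<open>\<beta>\<^sub>1\<close> and to 0 at a smaller \<open>\<beta>\<^sub>2\<close>, which orders the two thresholds.\<close>

section \<open>Mixtures and total variation\<close>

lemma sets_mixture [simp, measurable_cong]: "sets (mixture e P R) = sets P"
  by (simp add: mixture_def)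

lemma space_mixture [simp]: "space (mixture e P R) = space P"
  by (simp add: mixture_def space_measure_of_conv)

lemma emeasure_mixture:
  assumes R: "sets R = sets P"
  shows "emeasure (mixture e P R) A = ennreal (1 - e) * emeasure P A + ennreal e * emeasure R A"
proof (cases "A \<in> sets P")
  case False
  with R show ?thesis by (simp add: emeasure_notin_sets)
next
  case True
  let ?\<mu> = "\<lambda>A. ennreal (1 - e) * emeasure P A + ennreal e * emeasure R A"
  show ?thesis
    unfolding mixture_def
  proof (rule emeasure_measure_of_sigma)
    show "countably_additive (sets P) ?\<mu>"
    proof (rule countably_additiveI)
      fix F :: "nat \<Rightarrow> _" assume F: "range F \<subseteq> sets P" "disjoint_family F"
      then have "(\<Sum>i. ?\<mu> (F i)) = ennreal (1 - e) * (\<Sum>i. emeasure P (F i)) + ennreal e * (\<Sum>i. emeasure R (F i))"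
        by (simp add: suminf_add[symmetric])
      also have "\<dots> = ?\<mu> (\<Union>i. F i)"
        using F R by (simp add: suminf_emeasure)
      finally show "(\<Sum>i. ?\<mu> (F i)) = ?\<mu> (\<Union>i. F i)" .
    qed
  qed (use True sets.sigma_algebra_axioms in \<open>auto simp: positive_def\<close>)
qed

lemma nn_integral_mixture:
  assumes R: "sets R = sets P" and f: "f \<in> borel_measurable P"
  shows "(\<integral>\<^sup>+x. f x \<partial>mixture e P R) = ennreal (1 - e) * (\<integral>\<^sup>+x. f x \<partial>P) + ennreal e * (\<integral>\<^sup>+x. f x \<partial>R)"
proof -
  have meas: "g \<in> borel_measurable R" "g \<in> borel_measurable (mixture e P R)"
    if "g \<in> borel_measurable P" for g :: "_ \<Rightarrow> ennreal"
    using that by (simp_all add: measurable_cong_sets[OF R refl])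
  have sp: "space R = space P" using R by (rule sets_eq_imp_space_eq)
  from f show ?thesis
  proof induction
    case (cong f g)
    then show ?case
      by (simp add: sp cong: nn_integral_cong_simp)
  next
    case (set A)
    then show ?case by (simp add: R emeasure_mixture)
  next
    case (mult u c)
    then show ?case
      by (simp add: meas nn_integral_cmult algebra_simps)
  next
    case (add u v)
    then show ?case
      by (simp add: meas nn_integral_add algebra_simps)
  next
    case (seq U)
    have "incseq (\<lambda>i. c * integral\<^sup>N M (U i))" for c M
      using incseq_nn_integral[OF \<open>incseq U\<close>] by (auto simp: incseq_def mult_left_mono)
    with seq show ?case
      by (simp add: meas nn_integral_monotone_convergence_SUP SUP_mult_left_ennreal
          ennreal_SUP_add image_comp)
  qed
qed

lemma prob_space_mixture:
  assumes "prob_space P" "prob_space R" "sets R = sets P" "0 \<le> e" "e \<le> 1"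
  shows "prob_space (mixture e P R)"
proof
  have "space R = space P" using assms(3) by (rule sets_eq_imp_space_eq)
  then have "emeasure (mixture e P R) (space (mixture e P R)) = ennreal (1 - e) + ennreal e"
    using assms prob_space.emeasure_space_1[OF assms(2)]
    by (simp add: emeasure_mixture prob_space.emeasure_space_1)
  also have "\<dots> = 1" using assms by (simp flip: ennreal_plus)
  finally show "emeasure (mixture e P R) (space (mixture e P R)) = 1" .
qed

lemma mixture_1: "sets R = sets P \<Longrightarrow> mixture 1 P R = R"
  by (rule measure_eqI) (simp_all add: emeasure_mixture)

lemma mixture_mixture:
  assumes R: "sets R = sets P" and e: "0 \<le> e" "e \<le> 1" and t: "0 \<le> t" "t \<le> 1"
  shows "mixture t P (mixture e P R) = mixture (t * e) P R"
proof (rule measure_eqI)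
  fix A
  have "emeasure (mixture t P (mixture e P R)) A
      = (ennreal (1 - t) + ennreal t * ennreal (1 - e)) * emeasure P A + ennreal t * ennreal e * emeasure R A"
    using R by (simp add: emeasure_mixture algebra_simps)
  also have "ennreal (1 - t) + ennreal t * ennreal (1 - e) = ennreal (1 - t * e)"
    using e t mult_left_le[of e t]
    by (simp add: ennreal_plus[symmetric] ennreal_mult[symmetric] algebra_simps del: ennreal_plus)
  finally show "emeasure (mixture t P (mixture e P R)) A = emeasure (mixture (t * e) P R) A"
    using R e t by (simp add: emeasure_mixture ennreal_mult)
qed (simp add: R)

lemma abs_measure_diff_le_1:
  assumes "prob_space P" "prob_space R"
  shows "\<bar>measure P A - measure R B\<bar> \<le> 1"
  using prob_space.prob_le_1[OF assms(1), of A] prob_space.prob_le_1[OF assms(2), of B]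
    measure_nonneg[of P A] measure_nonneg[of R B] by linarith

lemma abs_measure_diff_le_TV:
  assumes "prob_space P" "prob_space R" "A \<in> sets P"
  shows "\<bar>measure P A - measure R A\<bar> \<le> TV P R"
  unfolding TV_def using assms abs_measure_diff_le_1[OF assms(1,2)]
  by (intro cSUP_upper bdd_aboveI[of _ 1]) auto

lemma TV_le:
  assumes "\<And>A. A \<in> sets P \<Longrightarrow> \<bar>measure P A - measure R A\<bar> \<le> c"
  shows "TV P R \<le> c"
  unfolding TV_def using assms sets.top[of P] by (intro cSUP_least) auto

lemma TV_nonneg: "prob_space P \<Longrightarrow> prob_space R \<Longrightarrow> 0 \<le> TV P R"
  using abs_measure_diff_le_TV[of P R "{}"] by simp

lemma TV_le_1: "prob_space P \<Longrightarrow> prob_space R \<Longrightarrow> TV P R \<le> 1"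
  by (intro TV_le abs_measure_diff_le_1)

section \<open>Products with one distinguished factor\<close>

lemma product_sigma_finite_prob: "(\<And>i. prob_space (M i)) \<Longrightarrow> product_sigma_finite M"
  unfolding product_sigma_finite_def by (simp add: prob_space_imp_sigma_finite)

lemma measurable_fun_upd_pair:
  assumes "k \<notin> J" "sets N = sets (M k)"
  shows "(\<lambda>(x, y). x(k := y)) \<in> measurable (PiM J M \<Otimes>\<^sub>M N) (PiM (insert k J) M)"
proof (rule measurable_PiM_single')
  fix i assume i: "i \<in> insert k J"
  show "(\<lambda>\<omega>. (case \<omega> of (x, y) \<Rightarrow> x(k := y)) i) \<in> measurable (PiM J M \<Otimes>\<^sub>M N) (M i)"
  proof (cases "i = k")
    case True
    then show ?thesis
      by (simp add: split_beta measurable_cong_sets[OF refl assms(2)[symmetric]])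
  next
    case False
    with i show ?thesis by (simp add: split_beta)
  qed
next
  show "(\<lambda>(x, y). x(k := y)) \<in> space (PiM J M \<Otimes>\<^sub>M N) \<rightarrow> (\<Pi>\<^sub>E i\<in>insert k J. space (M i))"
    using assms sets_eq_imp_space_eq[OF assms(2)]
    by (auto simp: space_pair_measure space_PiM PiE_iff extensional_def split: if_splits)
qed

lemma nn_integral_indicator_vimage:
  assumes "g \<in> measurable N K" "A \<in> sets K"
  shows "(\<integral>\<^sup>+y. indicator A (g y) \<partial>N) = emeasure N (g -` A \<inter> space N)"
proof -
  have "(\<integral>\<^sup>+y. indicator A (g y) \<partial>N) = (\<integral>\<^sup>+y. indicator (g -` A \<inter> space N) y \<partial>N)"
    by (rule nn_integral_cong) (simp add: indicator_def)
  also have "\<dots> = emeasure N (g -` A \<inter> space N)"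
    using assms by (intro nn_integral_indicator measurable_sets)
  finally show ?thesis .
qed

lemma
  fixes M :: "'i \<Rightarrow> 'a measure"
  assumes J: "finite J" "k \<notin> J" and M: "\<And>i. prob_space (M i)"
    and A: "A \<in> sets (PiM (insert k J) M)"
  shows sets_PiM_section: "\<And>y. y \<in> space (M k) \<Longrightarrow> (\<lambda>x. x(k:=y)) -` A \<inter> space (PiM J M) \<in> sets (PiM J M)"
    and borel_measurable_emeasure_PiM_section:
      "(\<lambda>y. emeasure (PiM J M) ((\<lambda>x. x(k:=y)) -` A \<inter> space (PiM J M))) \<in> borel_measurable (M k)"
    and emeasure_PiM_insert_sections: "emeasure (PiM (insert k J) M) A
      = (\<integral>\<^sup>+y. emeasure (PiM J M) ((\<lambda>x. x(k:=y)) -` A \<inter> space (PiM J M)) \<partial>M k)"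
proof -
  interpret PM: product_sigma_finite M by (rule product_sigma_finite_prob[OF M])
  interpret PJ: prob_space "PiM J M" by (intro prob_space_PiM M)
  have upd: "(\<lambda>(y, x). x(k := y)) \<in> measurable (M k \<Otimes>\<^sub>M PiM J M) (PiM (insert k J) M)"
    using measurable_compose[OF measurable_pair_swap' measurable_fun_upd_pair[OF J(2) refl]]
    by (simp add: split_beta comp_def)
  have upd_y: "(\<lambda>x. x(k:=y)) \<in> measurable (PiM J M) (PiM (insert k J) M)" if "y \<in> space (M k)" for y
    using measurable_compose[OF measurable_Pair[OF measurable_const measurable_ident_sets] upd] that
    by simp
  then show "\<And>y. y \<in> space (M k) \<Longrightarrow> (\<lambda>x. x(k:=y)) -` A \<inter> space (PiM J M) \<in> sets (PiM J M)"
    using A by (intro measurable_sets)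
  have integral_section: "(\<integral>\<^sup>+x. indicator A (x(k:=y)) \<partial>PiM J M)
      = emeasure (PiM J M) ((\<lambda>x. x(k:=y)) -` A \<inter> space (PiM J M))" if "y \<in> space (M k)" for y
    using upd_y[OF that] A by (rule nn_integral_indicator_vimage)
  have "(\<lambda>(y, x). indicator A (x(k:=y)) :: ennreal) \<in> borel_measurable (M k \<Otimes>\<^sub>M PiM J M)"
    using measurable_compose[OF upd borel_measurable_indicator[OF A]] by (simp add: split_beta')
  then have "(\<lambda>y. \<integral>\<^sup>+x. indicator A (x(k:=y)) \<partial>PiM J M) \<in> borel_measurable (M k)"
    by (intro PJ.borel_measurable_nn_integral) (simp add: split_beta)
  then show "(\<lambda>y. emeasure (PiM J M) ((\<lambda>x. x(k:=y)) -` A \<inter> space (PiM J M))) \<in> borel_measurable (M k)"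
    by (rule measurable_cong[THEN iffD1, rotated]) (simp add: integral_section)
  have "emeasure (PiM (insert k J) M) A = (\<integral>\<^sup>+y. (\<integral>\<^sup>+x. indicator A (x(k:=y)) \<partial>PiM J M) \<partial>M k)"
    using A J by (simp flip: PM.product_nn_integral_insert_rev)
  also have "\<dots> = (\<integral>\<^sup>+y. emeasure (PiM J M) ((\<lambda>x. x(k:=y)) -` A \<inter> space (PiM J M)) \<partial>M k)"
    by (rule nn_integral_cong) (rule integral_section)
  finally show "emeasure (PiM (insert k J) M) A
      = (\<integral>\<^sup>+y. emeasure (PiM J M) ((\<lambda>x. x(k:=y)) -` A \<inter> space (PiM J M)) \<partial>M k)" .
qed

lemma measure_PiM_update_mixture:
  fixes M :: "'i \<Rightarrow> 'a measure"
  assumes J: "finite J" "k \<notin> J" and M: "\<And>i. prob_space (M i)"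
    and Q: "prob_space Q" "sets Q = sets (M k)" and R: "prob_space R" "sets R = sets (M k)"
    and t: "0 \<le> t" "t \<le> 1" and A: "A \<in> sets (PiM (insert k J) M)"
  shows "measure (PiM (insert k J) (M(k := mixture t Q R))) A
      = (1 - t) * measure (PiM (insert k J) (M(k := Q))) A + t * measure (PiM (insert k J) (M(k := R))) A"
proof -
  define S where "S y = (\<lambda>x. x(k:=y)) -` A \<inter> space (PiM J M)" for y
  have upd: "emeasure (PiM (insert k J) (M(k := N))) A = (\<integral>\<^sup>+y. emeasure (PiM J M) (S y) \<partial>N)"
    "(\<lambda>y. emeasure (PiM J M) (S y)) \<in> borel_measurable N"
    "emeasure (PiM (insert k J) (M(k := N))) A = measure (PiM (insert k J) (M(k := N))) A"
    if N: "prob_space N" "sets N = sets (M k)" for N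
  proof -
    have MN: "\<And>i. prob_space ((M(k := N)) i)" using M N by simp
    have PiM_J: "PiM J (M(k := N)) = PiM J M" using J(2) by (auto intro!: PiM_cong)
    have "sets (PiM (insert k J) (M(k := N))) = sets (PiM (insert k J) M)"
      by (rule sets_PiM_cong) (auto simp: N)
    with A have A': "A \<in> sets (PiM (insert k J) (M(k := N)))" by simp
    show "emeasure (PiM (insert k J) (M(k := N))) A = (\<integral>\<^sup>+y. emeasure (PiM J M) (S y) \<partial>N)"
      "(\<lambda>y. emeasure (PiM J M) (S y)) \<in> borel_measurable N"
      using emeasure_PiM_insert_sections[where M="M(k := N)", OF J MN A']
        borel_measurable_emeasure_PiM_section[where M="M(k := N)", OF J MN A']
      by (simp_all add: S_def PiM_J)
    interpret prob_space "PiM (insert k J) (M(k := N))" by (intro prob_space_PiM MN)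
    show "emeasure (PiM (insert k J) (M(k := N))) A = measure (PiM (insert k J) (M(k := N))) A"
      by (rule emeasure_eq_measure)
  qed
  have mix: "prob_space (mixture t Q R)" "sets (mixture t Q R) = sets (M k)"
    using Q R t by (simp_all add: prob_space_mixture)
  have "emeasure (PiM (insert k J) (M(k := mixture t Q R))) A
      = ennreal (1 - t) * emeasure (PiM (insert k J) (M(k := Q))) A
        + ennreal t * emeasure (PiM (insert k J) (M(k := R))) A"
    using Q R by (simp add: upd[OF mix] upd[OF Q] upd[OF R] nn_integral_mixture)
  then show ?thesis
    using t upd(3)[OF mix] upd(3)[OF Q] upd(3)[OF R]
    by (simp add: ennreal_mult[symmetric] ennreal_plus[symmetric]
        del: ennreal_plus fun_upd_apply)
qed

lemma measure_PiM_insert_le_add: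
  fixes M N :: "'i \<Rightarrow> 'a measure"
  assumes J: "finite J" "k \<notin> J" and M: "\<And>i. prob_space (M i)" and N: "\<And>i. prob_space (N i)"
    and sets_eq: "\<And>i. sets (N i) = sets (M i)" and Nk: "N k = M k" and c: "0 \<le> c"
    and le: "\<And>B. B \<in> sets (PiM J M) \<Longrightarrow> measure (PiM J M) B \<le> measure (PiM J N) B + c"
    and A: "A \<in> sets (PiM (insert k J) M)"
  shows "measure (PiM (insert k J) M) A \<le> measure (PiM (insert k J) N) A + c"
proof -
  interpret PJM: prob_space "PiM J M" by (intro prob_space_PiM M)
  interpret PJN: prob_space "PiM J N" by (intro prob_space_PiM N)
  interpret PIM: prob_space "PiM (insert k J) M" by (intro prob_space_PiM M)
  interpret PIN: prob_space "PiM (insert k J) N" by (intro prob_space_PiM N)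
  interpret Mk: prob_space "M k" by (rule M)
  have "sets (PiM J N) = sets (PiM J M)" by (rule sets_PiM_cong) (auto simp: sets_eq)
  then have space_J: "space (PiM J N) = space (PiM J M)" by (rule sets_eq_imp_space_eq)
  have "sets (PiM (insert k J) N) = sets (PiM (insert k J) M)"
    by (rule sets_PiM_cong) (auto simp: sets_eq)
  with A have AN: "A \<in> sets (PiM (insert k J) N)" by simp
  define S where "S y = (\<lambda>x. x(k:=y)) -` A \<inter> space (PiM J M)" for y
  have section_le: "emeasure (PiM J M) (S y) \<le> emeasure (PiM J N) (S y) + ennreal c"
    if "y \<in> space (M k)" for y
  proof -
    have "S y \<in> sets (PiM J M)" using sets_PiM_section[OF J M A that] by (simp add: S_def)
    then have "measure (PiM J M) (S y) \<le> measure (PiM J N) (S y) + c" by (rule le)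
    then show ?thesis
      using c by (simp add: PJM.emeasure_eq_measure PJN.emeasure_eq_measure ennreal_plus[symmetric]
          del: ennreal_plus)
  qed
  have "emeasure (PiM (insert k J) M) A = (\<integral>\<^sup>+y. emeasure (PiM J M) (S y) \<partial>M k)"
    unfolding S_def by (rule emeasure_PiM_insert_sections[OF J M A])
  also have "\<dots> \<le> (\<integral>\<^sup>+y. emeasure (PiM J N) (S y) + ennreal c \<partial>M k)"
    by (rule nn_integral_mono) (rule section_le)
  also have "\<dots> = (\<integral>\<^sup>+y. emeasure (PiM J N) (S y) \<partial>M k) + ennreal c"
    using borel_measurable_emeasure_PiM_section[OF J N AN]
    by (simp add: nn_integral_add Mk.emeasure_space_1 space_J Nk S_def)
  also have "\<dots> = emeasure (PiM (insert k J) N) A + ennreal c"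
    using emeasure_PiM_insert_sections[OF J N AN] by (simp add: space_J Nk S_def)
  finally have "ennreal (measure (PiM (insert k J) M) A) \<le> ennreal (measure (PiM (insert k J) N) A + c)"
    using c by (simp add: PIM.emeasure_eq_measure PIN.emeasure_eq_measure ennreal_plus)
  then show ?thesis using c by (metis ennreal_le_iff add_nonneg_nonneg measure_nonneg)
qed

lemma TV_PiM_insert_same_le:
  fixes M N :: "'i \<Rightarrow> 'a measure"
  assumes J: "finite J" "k \<notin> J" and M: "\<And>i. prob_space (M i)" and N: "\<And>i. prob_space (N i)"
    and sets_eq: "\<And>i. sets (N i) = sets (M i)" and Nk: "N k = M k"
  shows "TV (PiM (insert k J) M) (PiM (insert k J) N) \<le> TV (PiM J M) (PiM J N)"
proof (rule TV_le)
  fix A assume A: "A \<in> sets (PiM (insert k J) M)"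
  let ?c = "TV (PiM J M) (PiM J N)"
  have c: "0 \<le> ?c" using M N by (intro TV_nonneg prob_space_PiM)
  have sets_J: "sets (PiM J N) = sets (PiM J M)" by (rule sets_PiM_cong) (auto simp: sets_eq)
  have sets_I: "sets (PiM (insert k J) N) = sets (PiM (insert k J) M)"
    by (rule sets_PiM_cong) (auto simp: sets_eq)
  have diff: "\<bar>measure (PiM J M) B - measure (PiM J N) B\<bar> \<le> ?c" if "B \<in> sets (PiM J M)" for B
    using M N that by (intro abs_measure_diff_le_TV prob_space_PiM)
  have le_MN: "measure (PiM J M) B \<le> measure (PiM J N) B + ?c" if "B \<in> sets (PiM J M)" for B
    using diff[OF that] by (simp add: abs_le_iff)
  have le_NM: "measure (PiM J N) B \<le> measure (PiM J M) B + ?c" if "B \<in> sets (PiM J N)" for B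
    using diff[of B] that sets_J by (simp add: abs_le_iff)
  have "measure (PiM (insert k J) M) A \<le> measure (PiM (insert k J) N) A + ?c"
    using measure_PiM_insert_le_add[OF J M N sets_eq Nk c le_MN A] .
  moreover have "measure (PiM (insert k J) N) A \<le> measure (PiM (insert k J) M) A + ?c"
    using measure_PiM_insert_le_add[OF J N M _ _ c le_NM] A sets_I sets_eq Nk by simp
  ultimately show "\<bar>measure (PiM (insert k J) M) A - measure (PiM (insert k J) N) A\<bar> \<le> ?c"
    by linarith
qed

lemma TV_PiM_mono:
  fixes M N :: "'i \<Rightarrow> 'a measure"
  assumes M: "\<And>i. prob_space (M i)" and N: "\<And>i. prob_space (N i)"
    and sets_eq: "\<And>i. sets (N i) = sets (M i)" and I: "finite I" "J \<subseteq> I"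
  shows "TV (PiM J M) (PiM J N) \<le> TV (PiM I M) (PiM I N)"
proof (rule TV_le)
  interpret PM: product_prob_space M I
    by (rule product_prob_space.intro[OF product_sigma_finite_prob]) (auto intro!: product_prob_space_axioms.intro M)
  interpret PN: product_prob_space N I
    by (rule product_prob_space.intro[OF product_sigma_finite_prob]) (auto intro!: product_prob_space_axioms.intro N)
  have J: "finite J" using I by (rule finite_subset[rotated])
  have sets_J: "sets (PiM J N) = sets (PiM J M)" by (rule sets_PiM_cong) (auto simp: sets_eq)
  fix B assume B: "B \<in> sets (PiM J M)"
  have emb_eq: "prod_emb I N J B = prod_emb I M J B"
    using sets_eq_imp_space_eq[OF sets_eq] by (simp add: prod_emb_def)
  have "measure (PiM I M) (prod_emb I M J B) = measure (PiM J M) B"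
    using PM.emeasure_PiM_emb'[OF I(2) J B] by (simp add: measure_def)
  moreover have "measure (PiM I N) (prod_emb I M J B) = measure (PiM J N) B"
    using PN.emeasure_PiM_emb'[OF I(2) J, of B] B sets_J emb_eq by (simp add: measure_def)
  moreover have "prod_emb I M J B \<in> sets (PiM I M)" using I B by simp
  ultimately show "\<bar>measure (PiM J M) B - measure (PiM J N) B\<bar> \<le> TV (PiM I M) (PiM I N)"
    using abs_measure_diff_le_TV[of "PiM I M" "PiM I N" "prod_emb I M J B"] M N
    by (simp add: prob_space_PiM)
qed

section \<open>Products of mixtures\<close>

lemma abs_convex_comb_le:
  fixes s x y C D :: real
  assumes "0 \<le> s" "s \<le> 1" "\<bar>x\<bar> \<le> C" "\<bar>y\<bar> \<le> D"
  shows "\<bar>(1 - s) * x + s * y\<bar> \<le> (1 - s) * C + s * D"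
proof -
  have "\<bar>(1 - s) * x\<bar> \<le> (1 - s) * C" using assms by (simp add: abs_mult mult_left_mono)
  moreover have "\<bar>s * y\<bar> \<le> s * D" using assms by (simp add: abs_mult mult_left_mono)
  ultimately show ?thesis by (smt (verit) abs_triangle_ineq)
qed

lemma TV_PiM_mixtures_insert_le:
  fixes Q P :: "'a measure" and s :: "'i \<Rightarrow> real"
  assumes Q: "prob_space Q" and P: "prob_space P" "sets P = sets Q"
    and s: "\<And>i. 0 \<le> s i" "\<And>i. s i \<le> 1" and J: "finite J" "k \<notin> J"
  shows "TV (PiM (insert k J) (\<lambda>_. Q)) (PiM (insert k J) (\<lambda>i. mixture (s i) Q P))
    \<le> (1 - s k) * TV (PiM J (\<lambda>_. Q)) (PiM J (\<lambda>i. mixture (s i) Q P))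
      + s k * TV (PiM (insert k J) (\<lambda>_. Q)) (PiM (insert k J) (\<lambda>i. mixture ((s(k := 1)) i) Q P))"
proof (rule TV_le)
  define \<mu> where "\<mu> i = mixture (s i) Q P" for i
  have \<mu>: "\<And>i. prob_space (\<mu> i)" "\<And>i. sets (\<mu> i) = sets Q"
    using Q P s by (simp_all add: \<mu>_def prob_space_mixture)
  have \<mu>Q: "\<And>i. prob_space ((\<mu>(k := Q)) i)" "\<And>i. sets ((\<mu>(k := Q)) i) = sets Q"
    using \<mu> Q by simp_all
  have \<mu>P: "\<mu>(k := P) = (\<lambda>i. mixture ((s(k := 1)) i) Q P)"
    by (auto simp: \<mu>_def mixture_1 P)
  have PiM_J: "PiM J (\<mu>(k := Q)) = PiM J \<mu>" using J(2) by (auto intro!: PiM_cong)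
  let ?Q = "PiM (insert k J) (\<lambda>_. Q)"
  fix A assume A: "A \<in> sets ?Q"
  have "sets (PiM (insert k J) \<mu>) = sets ?Q" by (rule sets_PiM_cong) (auto simp: \<mu>)
  with A have "measure (PiM (insert k J) (\<mu>(k := \<mu> k))) A
      = (1 - s k) * measure (PiM (insert k J) (\<mu>(k := Q))) A + s k * measure (PiM (insert k J) (\<mu>(k := P))) A"
    unfolding \<mu>_def[of k] using Q P s by (intro measure_PiM_update_mixture[OF J \<mu>(1)]) (auto simp: \<mu>)
  then have "measure ?Q A - measure (PiM (insert k J) \<mu>) A
      = (1 - s k) * (measure ?Q A - measure (PiM (insert k J) (\<mu>(k := Q))) A)
        + s k * (measure ?Q A - measure (PiM (insert k J) (\<mu>(k := P))) A)"
    by (simp add: algebra_simps)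
  also have "\<bar>\<dots>\<bar> \<le> (1 - s k) * TV (PiM J (\<lambda>_. Q)) (PiM J \<mu>)
      + s k * TV ?Q (PiM (insert k J) (\<mu>(k := P)))"
  proof (rule abs_convex_comb_le[OF s])
    have "\<bar>measure ?Q A - measure (PiM (insert k J) (\<mu>(k := Q))) A\<bar> \<le> TV ?Q (PiM (insert k J) (\<mu>(k := Q)))"
      using Q \<mu>Q A by (intro abs_measure_diff_le_TV prob_space_PiM)
    also have "\<dots> \<le> TV (PiM J (\<lambda>_. Q)) (PiM J \<mu>)"
      using TV_PiM_insert_same_le[OF J, of "\<lambda>_. Q" "\<mu>(k := Q)"] Q \<mu>Q by (simp add: PiM_J)
    finally show "\<bar>measure ?Q A - measure (PiM (insert k J) (\<mu>(k := Q))) A\<bar> \<le> TV (PiM J (\<lambda>_. Q)) (PiM J \<mu>)" .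
    show "\<bar>measure ?Q A - measure (PiM (insert k J) (\<mu>(k := P))) A\<bar> \<le> TV ?Q (PiM (insert k J) (\<mu>(k := P)))"
      using Q P \<mu> A by (intro abs_measure_diff_le_TV prob_space_PiM) auto
  qed
  finally show "\<bar>measure ?Q A - measure (PiM (insert k J) (\<lambda>i. mixture (s i) Q P)) A\<bar>
    \<le> (1 - s k) * TV (PiM J (\<lambda>_. Q)) (PiM J (\<lambda>i. mixture (s i) Q P))
      + s k * TV ?Q (PiM (insert k J) (\<lambda>i. mixture ((s(k := 1)) i) Q P))"
    unfolding \<mu>P[symmetric] \<mu>_def[abs_def, symmetric] .
qed

lemma TV_PiM_mixtures_le_sum:
  fixes Q P :: "'a measure" and s :: "'i \<Rightarrow> real"
  assumes Q: "prob_space Q" and P: "prob_space P" "sets P = sets Q"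
    and s: "\<And>i. 0 \<le> s i" "\<And>i. s i \<le> 1" and I: "finite I"
  shows "TV (PiM I (\<lambda>_. Q)) (PiM I (\<lambda>i. mixture (s i) Q P)) \<le> (\<Sum>i\<in>I. s i)"
  using I
proof (induction I rule: finite_induct)
  case empty
  show ?case by (rule TV_le) (simp add: PiM_empty)
next
  case (insert k J)
  have "TV (PiM (insert k J) (\<lambda>_. Q)) (PiM (insert k J) (\<lambda>i. mixture ((s(k := 1)) i) Q P)) \<le> 1"
    using Q P s by (intro TV_le_1 prob_space_PiM prob_space_mixture) auto
  then have "s k * TV (PiM (insert k J) (\<lambda>_. Q)) (PiM (insert k J) (\<lambda>i. mixture ((s(k := 1)) i) Q P))
      \<le> s k * 1"
    using s by (intro mult_left_mono) auto
  moreover have "(1 - s k) * TV (PiM J (\<lambda>_. Q)) (PiM J (\<lambda>i. mixture (s i) Q P)) \<le> (1 - s k) * (\<Sum>i\<in>J. s i)"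
    using insert.IH s by (intro mult_left_mono) auto
  ultimately have "TV (PiM (insert k J) (\<lambda>_. Q)) (PiM (insert k J) (\<lambda>i. mixture (s i) Q P))
      \<le> (1 - s k) * (\<Sum>i\<in>J. s i) + s k * 1"
    using TV_PiM_mixtures_insert_le[where s=s, OF Q P s insert(1,2)] by linarith
  also have "\<dots> \<le> (\<Sum>i\<in>insert k J. s i)"
    using insert(1,2) s sum_nonneg[of J s] by (simp add: algebra_simps)
  finally show ?case .
qed

lemma TV_PiM_mixtures_le_TV:
  fixes Q P :: "'a measure" and s :: "'i \<Rightarrow> real"
  assumes Q: "prob_space Q" and P: "prob_space P" "sets P = sets Q"
    and s: "\<And>i. 0 \<le> s i" "\<And>i. s i \<le> 1" and I: "finite I"
  shows "TV (PiM I (\<lambda>_. Q)) (PiM I (\<lambda>i. mixture (s i) Q P)) \<le> TV (PiM I (\<lambda>_. Q)) (PiM I (\<lambda>_. P))"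
proof -
  have "TV (PiM I (\<lambda>_. Q)) (PiM I (\<lambda>i. mixture (s i) Q P)) \<le> TV (PiM I (\<lambda>_. Q)) (PiM I (\<lambda>_. P))"
    if "finite F" "finite I" "\<And>i. 0 \<le> s i" "\<And>i. s i \<le> 1" "\<And>i. i \<in> I - F \<Longrightarrow> s i = 1"
    for F and I :: "'i set" and s
    \<comment> \<open>induction on a finite set \<open>F\<close> outside of which every factor already equals \<open>P\<close>\<close>
    using that
  proof (induction F arbitrary: I s rule: finite_induct)
    case empty
    then have "PiM I (\<lambda>i. mixture (s i) Q P) = PiM I (\<lambda>_. P)"
      by (intro PiM_cong) (auto simp: mixture_1 P)
    then show ?case by simp
  next
    case (insert k F)
    show ?case
    proof (cases "k \<in> I")
      case False
      with insert.prems show ?thesis by (intro insert.IH) auto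
    next
      case True
      define J where "J = I - {k}"
      have I: "I = insert k J" "k \<notin> J" "finite J" using True insert.prems(1) by (auto simp: J_def)
      let ?TV = "\<lambda>J. TV (PiM J (\<lambda>_. Q)) (PiM J (\<lambda>_. P))"
      have "?TV J \<le> ?TV I" using Q P insert.prems(1) by (intro TV_PiM_mono) (auto simp: J_def)
      moreover have "TV (PiM J (\<lambda>_. Q)) (PiM J (\<lambda>i. mixture (s i) Q P)) \<le> ?TV J"
        using insert.prems by (intro insert.IH) (auto simp: J_def)
      moreover have "TV (PiM I (\<lambda>_. Q)) (PiM I (\<lambda>i. mixture ((s(k := 1)) i) Q P)) \<le> ?TV I"
        using insert.prems by (intro insert.IH) auto
      ultimately have "(1 - s k) * TV (PiM J (\<lambda>_. Q)) (PiM J (\<lambda>i. mixture (s i) Q P))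
          + s k * TV (PiM I (\<lambda>_. Q)) (PiM I (\<lambda>i. mixture ((s(k := 1)) i) Q P))
          \<le> (1 - s k) * ?TV I + s k * ?TV I"
        using insert.prems(2,3)[of k] by (intro add_mono mult_left_mono) auto
      with TV_PiM_mixtures_insert_le[where s=s, OF Q P insert.prems(2,3) I(3,2)] show ?thesis
        unfolding I(1) by (simp add: algebra_simps)
    qed
  qed
  with I s show ?thesis by blast
qed

section \<open>Monotonicity and decay of \<open>V\<close>\<close>

lemma nat_powr_neg_le_1: "0 \<le> \<beta> \<Longrightarrow> real n powr (- \<beta>) \<le> 1"
  by (cases "n = 0") (auto simp: powr_minus_divide intro: ge_one_powr_ge_zero)

context
  fixes Q G :: "nat \<Rightarrow> 'a measure"
  assumes Q: "\<And>n. prob_space (Q n)" and G: "\<And>n. prob_space (G n)"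
    and sets_G: "\<And>n. sets (G n) = sets (Q n)"
begin

lemma V_nonneg: "0 \<le> \<beta> \<Longrightarrow> 0 \<le> V Q G \<beta> n"
  unfolding V_def using Q G sets_G nat_powr_neg_le_1
  by (intro TV_nonneg prob_space_PiM prob_space_mixture) auto

lemma V_le: "0 \<le> \<beta> \<Longrightarrow> V Q G \<beta> n \<le> real n * real n powr (- \<beta>)"
  unfolding V_def using TV_PiM_mixtures_le_sum[OF Q G sets_G, of "\<lambda>_. real n powr (- \<beta>)" "{..<n}"]
  by (simp add: nat_powr_neg_le_1)

lemma V_antimono:
  assumes "0 \<le> \<beta>\<^sub>2" "\<beta>\<^sub>2 \<le> \<beta>\<^sub>1"
  shows "V Q G \<beta>\<^sub>1 n \<le> V Q G \<beta>\<^sub>2 n"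
proof -
  define e\<^sub>1 e\<^sub>2 where "e\<^sub>1 = real n powr (- \<beta>\<^sub>1)" and "e\<^sub>2 = real n powr (- \<beta>\<^sub>2)"
  have e\<^sub>2: "0 \<le> e\<^sub>2" "e\<^sub>2 \<le> 1" using assms by (simp_all add: e\<^sub>2_def nat_powr_neg_le_1)
  have "e\<^sub>1 \<le> e\<^sub>2"
  proof (cases "n = 0")
    case False
    with assms show ?thesis by (auto simp: e\<^sub>1_def e\<^sub>2_def intro!: powr_mono)
  qed (simp add: e\<^sub>1_def e\<^sub>2_def)
  then have e\<^sub>1: "0 \<le> e\<^sub>1" "e\<^sub>1 \<le> e\<^sub>2" by (simp_all add: e\<^sub>1_def)
  define t where "t = e\<^sub>1 / e\<^sub>2"
  have t: "0 \<le> t" "t \<le> 1" "t * e\<^sub>2 = e\<^sub>1"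
    using e\<^sub>1 e\<^sub>2 by (auto simp: t_def divide_le_eq_1)
  define P where "P = mixture e\<^sub>2 (Q n) (G n)"
  have P: "prob_space P" "sets P = sets (Q n)"
    using Q G sets_G e\<^sub>2 by (simp_all add: P_def prob_space_mixture)
  have "mixture e\<^sub>1 (Q n) (G n) = mixture t (Q n) P"
    using mixture_mixture[OF sets_G e\<^sub>2 t(1,2)] by (simp add: P_def t(3))
  then show ?thesis
    using TV_PiM_mixtures_le_TV[OF Q P, of "\<lambda>_. t" "{..<n}"] t
    by (simp add: V_def P_def flip: e\<^sub>1_def e\<^sub>2_def)
qed

lemma V_tendsto_0:
  assumes "1 < \<beta>"
  shows "(\<lambda>n. V Q G \<beta> n) \<longlonglongrightarrow> 0"
proof -
  have "eventually (\<lambda>n. 0 \<le> V Q G \<beta> n) sequentially"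
    using assms by (intro always_eventually allI V_nonneg) auto
  moreover have "V Q G \<beta> n \<le> real n powr (1 - \<beta>)" if "1 \<le> n" for n
    using V_le[of \<beta> n] assms that by (simp add: powr_diff powr_minus_divide)
  then have "eventually (\<lambda>n. V Q G \<beta> n \<le> real n powr (1 - \<beta>)) sequentially"
    by (rule eventually_sequentiallyI)
  moreover have "(\<lambda>n. real n powr (1 - \<beta>)) \<longlonglongrightarrow> 0"
    using assms by (intro tendsto_neg_powr filterlim_real_sequentially) auto
  ultimately show ?thesis by (rule tendsto_sandwich[OF _ _ tendsto_const])
qed

lemma le_of_V_tendsto_1_0:
  assumes "(\<lambda>n. V Q G \<beta>\<^sub>1 n) \<longlonglongrightarrow> 1" "(\<lambda>n. V Q G \<beta>\<^sub>2 n) \<longlonglongrightarrow> 0" "0 \<le> \<beta>\<^sub>2"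
  shows "\<beta>\<^sub>1 \<le> \<beta>\<^sub>2"
proof (rule ccontr)
  assume "\<not> \<beta>\<^sub>1 \<le> \<beta>\<^sub>2"
  then have "\<forall>n. V Q G \<beta>\<^sub>1 n \<le> V Q G \<beta>\<^sub>2 n"
    using assms(3) V_antimono[of \<beta>\<^sub>2 \<beta>\<^sub>1] by simp
  then have "(1::real) \<le> 0"
    by (intro tendsto_le[OF trivial_limit_sequentially assms(2,1)] always_eventually)
  then show False by simp
qed

end

theorem lemma1:
  fixes Q G :: "nat \<Rightarrow> 'a measure"
  assumes "\<And>n. prob_space (Q n)"
    and "\<And>n. prob_space (G n)"
    and "\<And>n. sets (G n) = sets (Q n)"
  shows "0 \<le> beta_lower Q G \<and> beta_lower Q G \<le> beta_upper Q G \<and> beta_upper Q G \<le> 1"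
proof -
  define L where "L = insert 0 {\<beta>. \<beta> \<ge> 0 \<and> (\<lambda>n. V Q G \<beta> n) \<longlonglongrightarrow> 1}"
  define U where "U = {\<beta>. \<beta> \<ge> 0 \<and> (\<lambda>n. V Q G \<beta> n) \<longlonglongrightarrow> 0}"
  have gt_1: "\<beta> \<in> U" if "1 < \<beta>" for \<beta>
    using V_tendsto_0[OF assms that] that by (simp add: U_def)
  have U_nonempty: "U \<noteq> {}" using gt_1[of 2] by auto
  have "bdd_below U" unfolding U_def by (rule bdd_belowI[of _ 0]) auto
  have "Inf U \<le> 1"
  proof (rule field_le_epsilon)
    fix e :: real assume "0 < e"
    then show "Inf U \<le> 1 + e" using gt_1[of "1 + e"] \<open>bdd_below U\<close> by (intro cInf_lower) auto
  qed
  moreover have L_le_U: "x \<le> Inf U" if "x \<in> L" for x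
  proof (rule cInf_greatest[OF U_nonempty])
    fix \<beta> assume "\<beta> \<in> U"
    then show "x \<le> \<beta>" using that le_of_V_tendsto_1_0[OF assms] by (auto simp: L_def U_def)
  qed
  moreover have "0 \<le> Sup L"
    using L_le_U by (intro cSup_upper bdd_aboveI[of L "Inf U"]) (auto simp: L_def)
  moreover have "Sup L \<le> Inf U"
    using L_le_U by (intro cSup_least) (auto simp: L_def)
  ultimately show ?thesis by (simp add: beta_lower_def beta_upper_def flip: L_def U_def)
qed

end
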